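(* Let $P_0=\mathcal N(0,1)$ and $P_1=\mathcal N(\theta,1)$ for some $\theta>0$, in the sparse support recovery problem described in the context. Let $\delta>0$ and let $m\ge2$ be an even integer. The Simple Sequential Thresholding procedure (described in the context) with inputs $\delta$ and $m$ satisfies $\mathbb{P}_e<\delta$ provided $$m>\frac{\log s+\log\log_2\left(\frac{2n}{\delta}\right)+\log\left(\frac1\delta\right)}{\theta^2/4}.$$
   Context: Setting: $\mathcal S\subset\{1,\dots,n\}$ is an unknown support set with $|\mathcal S|=s$. For each $i$, one can draw i.i.d. samples of $Y_i$, where $Y_i\sim P_0$ if $i\notin\mathcal S$ and $Y_i\sim P_1$ if $i\in\mathcal S$, all samples independent. Simple Sequential Thresholding with inputs $\delta>0$ and even integer $m\ge2$: set $\mathcal S_1=\{1,\dots,n\}$ and $K=\lceil\log_2(2n/\delta)\rceil$. For $k=1,\dots,K$: for each $i\in\mathcal S_k$, draw $m/2$ fresh samples of $Y_i$ and let $T_i$ be their sum; set $\mathcal S_{k+1}=\{i\in\mathcal S_k: T_i>0\}$. Output $\hat{\mathcal S}=\mathcal S_{K+1}$. $\mathbb{P}_e=\mathbb{P}(\hat{\mathcal S}\ne\mathcal S)$. *)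

theory Defs
  imports "HOL-Probability.Probability"
begin

definition sst_rounds :: "nat \<Rightarrow> real \<Rightarrow> nat" where
  "sst_rounds n \<delta> = nat \<lceil>log 2 (2 * real n / \<delta>)\<rceil>"

text \<open>Simple Sequential Thresholding.  y i k j is the j-th fresh sample of Y_i drawn
  in round k (k = 1..K, j = 1..m/2).  sst_set n m y k is the set S_(k+1) after k rounds;
  sst_set n m y 0 = S_1 = {1..n}.\<close>
fun sst_set :: "nat \<Rightarrow> nat \<Rightarrow> (nat \<Rightarrow> nat \<Rightarrow> nat \<Rightarrow> real) \<Rightarrow> nat \<Rightarrow> nat set" where
  "sst_set n m y 0 = {1..n}"
| "sst_set n m y (Suc k) =
     {i \<in> sst_set n m y k. (\<Sum>j = 1..m div 2. y i (Suc k) j) > 0}"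

definition sst_output :: "nat \<Rightarrow> nat \<Rightarrow> real \<Rightarrow> (nat \<Rightarrow> nat \<Rightarrow> nat \<Rightarrow> real) \<Rightarrow> nat set" where
  "sst_output n m \<delta> y = sst_set n m y (sst_rounds n \<delta>)"

end

theory Submission
  imports Defs
begin

text \<open>A coordinate is misclassified only if some round sum of a signal coordinate is
  nonpositive, or every round sum of a null coordinate is positive.  A round sum of \<open>m/2\<close>
  samples is \<open>N(m\<theta>/2, m/2)\<close> or \<open>N(0, m/2)\<close>.  Comparing the shifted density with the centred
  one on the negative half line bounds the first event by \<open>exp(-m\<theta>\<^sup>2/4)/2\<close> per round;
  independence of the rounds gives exactly \<open>2\<^sup>-\<^sup>K\<close> for the second.  The union bound yields
  \<open>P\<^sub>e \<le> s K exp(-m\<theta>\<^sup>2/4)/2 + (n - s) 2\<^sup>-\<^sup>K\<close>, which is below \<open>\<delta>\<close> for \<open>K = \<lceil>log\<^sub>2(2n/\<delta>)\<rceil>\<close>;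
  the rounding \<open>f = K - log\<^sub>2(2n/\<delta>)\<close> is paid for by the convexity bound
  \<open>2\<^sup>-\<^sup>f \<le> 1 - f/2\<close> on the null term.\<close>

lemma normal_density_half_lines:
  assumes "0 < \<sigma>"
  shows "(\<integral>\<^sup>+x. ennreal (normal_density 0 \<sigma> x) * indicator {..0} x \<partial>lborel) = 1/2"
    and "(\<integral>\<^sup>+x. ennreal (normal_density 0 \<sigma> x) * indicator {0<..} x \<partial>lborel) = 1/2"
proof -
  define L where "L = (\<integral>\<^sup>+x. ennreal (normal_density 0 \<sigma> x) * indicator {..0} x \<partial>lborel)"
  define R where "R = (\<integral>\<^sup>+x. ennreal (normal_density 0 \<sigma> x) * indicator {0<..} x \<partial>lborel)"
  have "1 = (\<integral>\<^sup>+x. ennreal (normal_density 0 \<sigma> x) \<partial>lborel)"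
    using assms by (subst nn_integral_eq_integral) auto
  also have "\<dots> = (\<integral>\<^sup>+x. ennreal (normal_density 0 \<sigma> x) * indicator {..0} x
                      + ennreal (normal_density 0 \<sigma> x) * indicator {0<..} x \<partial>lborel)"
    by (intro nn_integral_cong) (auto simp: indicator_def)
  also have "\<dots> = L + R"
    unfolding L_def R_def by (intro nn_integral_add) auto
  finally have total: "L + R = 1" ..
  have "L = (\<integral>\<^sup>+x. ennreal (normal_density 0 \<sigma> (0 + -1 * x)) * indicator {..0} (0 + -1 * x) \<partial>lborel)"
    unfolding L_def by (subst nn_integral_real_affine[of _ "-1" 0]) auto
  also have "\<dots> = (\<integral>\<^sup>+x. ennreal (normal_density 0 \<sigma> x) * indicator {0..} x \<partial>lborel)"
    by (intro nn_integral_cong) (simp add: normal_density_def indicator_def)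
  also have "\<dots> = R"
    unfolding R_def using AE_lborel_singleton[of 0]
    by (intro nn_integral_cong_AE) (auto elim!: eventually_mono simp: indicator_def)
  finally have "L = R" .
  with total have "2 * L = 1"
    by (simp add: mult_2)
  then have "L = 1/2"
    using mult_divide_eq_ennreal[of 2 L] by (simp add: mult.commute)
  with \<open>L = R\<close> show "L = 1/2" "R = 1/2" by auto
qed

lemma normal_density_le_exp_mult_centered:
  assumes "x \<le> 0" and "0 \<le> \<mu>"
  shows "normal_density \<mu> \<sigma> x \<le> exp (- \<mu>\<^sup>2 / (2 * \<sigma>\<^sup>2)) * normal_density 0 \<sigma> x"
proof -
  have "x\<^sup>2 + \<mu>\<^sup>2 \<le> (x - \<mu>)\<^sup>2"
    using assms by (simp add: power2_eq_square algebra_simps mult_nonneg_nonpos)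
  then have "- (x - \<mu>)\<^sup>2 / (2 * \<sigma>\<^sup>2) \<le> - \<mu>\<^sup>2 / (2 * \<sigma>\<^sup>2) + - x\<^sup>2 / (2 * \<sigma>\<^sup>2)"
    by (simp add: divide_simps)
  then have "exp (- (x - \<mu>)\<^sup>2 / (2 * \<sigma>\<^sup>2)) \<le> exp (- \<mu>\<^sup>2 / (2 * \<sigma>\<^sup>2)) * exp (- x\<^sup>2 / (2 * \<sigma>\<^sup>2))"
    by (simp add: exp_add[symmetric])
  then show ?thesis
    unfolding normal_density_def by (simp add: divide_right_mono)
qed

lemma (in prob_space) prob_normal_nonpos_le:
  assumes "distributed M lborel X (normal_density \<mu> \<sigma>)" and "0 \<le> \<mu>" and "0 < \<sigma>"
  shows "prob {\<omega> \<in> space M. X \<omega> \<le> 0} \<le> exp (- \<mu>\<^sup>2 / (2 * \<sigma>\<^sup>2)) / 2"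
proof -
  define c where "c = exp (- \<mu>\<^sup>2 / (2 * \<sigma>\<^sup>2))"
  have "emeasure M {\<omega> \<in> space M. X \<omega> \<le> 0}
      = (\<integral>\<^sup>+x. ennreal (normal_density \<mu> \<sigma> x) * indicator {..0} x \<partial>lborel)"
    using distributed_emeasure[OF assms(1), of "{..0}"] by (simp add: vimage_def Int_def conj_commute)
  also have "\<dots> \<le> (\<integral>\<^sup>+x. ennreal c * (ennreal (normal_density 0 \<sigma> x) * indicator {..0} x) \<partial>lborel)"
    using normal_density_le_exp_mult_centered[OF _ assms(2)]
    by (intro nn_integral_mono) (auto simp: c_def indicator_def ennreal_mult'[symmetric] ennreal_leI)
  also have "\<dots> = ennreal c * (1/2)"
    by (simp add: nn_integral_cmult normal_density_half_lines(1)[OF assms(3)])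
  also have "\<dots> = ennreal c / 2"
    by (simp add: divide_ennreal_def)
  also have "\<dots> = ennreal (c / 2)"
    by (simp add: c_def ennreal_divide_numeral)
  finally show ?thesis
    unfolding measure_def c_def by (intro enn2real_leI) auto
qed

lemma (in prob_space) prob_centered_normal_pos:
  assumes "distributed M lborel X (normal_density 0 \<sigma>)" and "0 < \<sigma>"
  shows "prob {\<omega> \<in> space M. 0 < X \<omega>} = 1/2"
proof -
  have "emeasure M {\<omega> \<in> space M. 0 < X \<omega>}
      = (\<integral>\<^sup>+x. ennreal (normal_density 0 \<sigma> x) * indicator {0<..} x \<partial>lborel)"
    using distributed_emeasure[OF assms(1), of "{0<..}"] by (simp add: vimage_def Int_def conj_commute)
  also have "\<dots> = 1/2"
    by (rule normal_density_half_lines(2)[OF assms(2)])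
  also have "\<dots> = ennreal (1/2)"
    using ennreal_divide_numeral[of 1 "num.Bit0 num.One"] by simp
  finally show ?thesis
    unfolding measure_def by (simp only:) (rule enn2real_ennreal, simp)
qed

lemma (in prob_space) distributed_block_sum_normal:
  fixes Y :: "'i \<Rightarrow> 'k \<Rightarrow> 'j \<Rightarrow> 'a \<Rightarrow> real" and \<mu> \<sigma> :: real
  assumes indep: "indep_vars (\<lambda>_. borel) (\<lambda>(i, k, j). Y i k j) (I \<times> R \<times> J)"
    and "i \<in> I" "k \<in> R" "finite J" "J \<noteq> {}" "0 < \<sigma>"
    and normal: "\<And>j. j \<in> J \<Longrightarrow> distributed M lborel (Y i k j) (normal_density \<mu> \<sigma>)"
  shows "distributed M lborel (\<lambda>\<omega>. \<Sum>j\<in>J. Y i k j \<omega>)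
           (normal_density (card J * \<mu>) (sqrt (card J) * \<sigma>))"
proof -
  define B where "B = (\<lambda>j. (i, k, j)) ` J"
  have inj: "inj_on (\<lambda>j. (i, k, j)) J"
    by (auto simp: inj_on_def)
  have "distributed M lborel (\<lambda>\<omega>. \<Sum>t\<in>B. (\<lambda>(i, k, j). Y i k j) t \<omega>)
          (normal_density (\<Sum>t\<in>B. \<mu>) (sqrt (\<Sum>t\<in>B. \<sigma>\<^sup>2)))"
  proof (rule sum_indep_normal)
    show "indep_vars (\<lambda>_. borel) (\<lambda>(i, k, j). Y i k j) B"
      using assms(2,3) by (intro indep_vars_subset[OF indep]) (auto simp: B_def)
  qed (use assms in \<open>auto simp: B_def\<close>)
  moreover have "card B = card J"
    unfolding B_def using inj by (rule card_image)
  moreover have "(\<lambda>\<omega>. \<Sum>t\<in>B. (\<lambda>(i, k, j). Y i k j) t \<omega>) = (\<lambda>\<omega>. \<Sum>j\<in>J. Y i k j \<omega>)"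
    unfolding B_def by (simp add: sum.reindex[OF inj])
  ultimately show ?thesis
    using \<open>0 < \<sigma>\<close> by (simp add: real_sqrt_mult)
qed

lemma (in prob_space) indep_vars_block_sums:
  fixes Y :: "'i \<Rightarrow> 'k \<Rightarrow> 'j \<Rightarrow> 'a \<Rightarrow> real"
  assumes indep: "indep_vars (\<lambda>_. borel) (\<lambda>(i, k, j). Y i k j) (I \<times> R \<times> J)" and "i \<in> I"
  shows "indep_vars (\<lambda>_. borel) (\<lambda>k \<omega>. \<Sum>j\<in>J. Y i k j \<omega>) R"
proof -
  define B where "B k = {i} \<times> {k} \<times> J" for k :: 'k
  have "indep_vars (\<lambda>k. PiM (B k) (\<lambda>_. borel))
          (\<lambda>k \<omega>. restrict (\<lambda>t. (\<lambda>(i, k, j). Y i k j) t \<omega>) (B k)) R"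
    using indep \<open>i \<in> I\<close> by (intro indep_vars_restrict) (auto simp: B_def disjoint_family_on_def)
  then have "indep_vars (\<lambda>_. borel)
      (\<lambda>k \<omega>. (\<lambda>g. \<Sum>j\<in>J. g (i, k, j)) (restrict (\<lambda>t. (\<lambda>(i, k, j). Y i k j) t \<omega>) (B k))) R"
    by (rule indep_vars_compose2)
      (auto simp: B_def intro!: borel_measurable_sum measurable_component_singleton)
  then show ?thesis
    by (simp add: B_def cong: sum.cong)
qed

lemma (in prob_space) prob_all_centered_normal_pos:
  assumes indep: "indep_vars (\<lambda>_. borel) T R" and "finite R" "0 < \<sigma>"
    and normal: "\<And>k. k \<in> R \<Longrightarrow> distributed M lborel (T k) (normal_density 0 \<sigma>)"
  shows "prob {\<omega> \<in> space M. \<forall>k\<in>R. 0 < T k \<omega>} = (1/2) ^ card R"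
proof (cases "R = {}")
  case False
  have "{\<omega> \<in> space M. \<forall>k\<in>R. 0 < T k \<omega>} = (\<Inter>k\<in>R. T k -` {0<..} \<inter> space M)"
    using False by auto
  also have "prob \<dots> = (\<Prod>k\<in>R. prob (T k -` {0<..} \<inter> space M))"
    using False \<open>finite R\<close> by (intro indep_varsD[OF indep]) auto
  also have "\<dots> = (\<Prod>k\<in>R. 1/2)"
  proof (rule prod.cong)
    fix k assume "k \<in> R"
    then have "prob {\<omega> \<in> space M. 0 < T k \<omega>} = 1/2"
      using normal \<open>0 < \<sigma>\<close> by (intro prob_centered_normal_pos) auto
    then show "prob (T k -` {0<..} \<inter> space M) = 1/2"
      by (simp add: vimage_def Int_def conj_commute)
  qed simp
  finally show ?thesis by simp
qed (simp add: prob_space)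

lemma (in prob_space) prob_threshold_support_ne_le:
  fixes T :: "'i \<Rightarrow> 'k \<Rightarrow> 'a \<Rightarrow> real" and p q :: real
  assumes "finite N" "finite R" "S \<subseteq> N"
    and meas: "\<And>i k. i \<in> N \<Longrightarrow> k \<in> R \<Longrightarrow> T i k \<in> borel_measurable M"
    and signal: "\<And>i k. i \<in> S \<Longrightarrow> k \<in> R \<Longrightarrow> prob {\<omega> \<in> space M. T i k \<omega> \<le> 0} \<le> p"
    and null: "\<And>i. i \<in> N - S \<Longrightarrow> prob {\<omega> \<in> space M. \<forall>k\<in>R. 0 < T i k \<omega>} \<le> q"
  shows "prob {\<omega> \<in> space M. {i \<in> N. \<forall>k\<in>R. 0 < T i k \<omega>} \<noteq> S}
           \<le> card S * (card R * p) + card (N - S) * q"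
proof -
  define Miss where "Miss i k = {\<omega> \<in> space M. T i k \<omega> \<le> 0}" for i k
  define Keep where "Keep i = {\<omega> \<in> space M. \<forall>k\<in>R. 0 < T i k \<omega>}" for i
  have "finite S"
    using \<open>finite N\<close> \<open>S \<subseteq> N\<close> by (rule finite_subset[rotated])
  have Miss_sets: "Miss i k \<in> sets M" if "i \<in> S" "k \<in> R" for i k
  proof -
    have "T i k \<in> borel_measurable M"
      using meas that \<open>S \<subseteq> N\<close> by auto
    then show ?thesis
      unfolding Miss_def by measurable
  qed
  have Keep_sets: "Keep i \<in> sets M" if "i \<in> N" for i
    using meas that \<open>finite R\<close> unfolding Keep_def by measurable
  have "{\<omega> \<in> space M. {i \<in> N. \<forall>k\<in>R. 0 < T i k \<omega>} \<noteq> S}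
          \<subseteq> (\<Union>i\<in>S. \<Union>k\<in>R. Miss i k) \<union> (\<Union>i\<in>N - S. Keep i)"
    using \<open>S \<subseteq> N\<close> by (auto simp: Miss_def Keep_def not_less)
  then have "prob {\<omega> \<in> space M. {i \<in> N. \<forall>k\<in>R. 0 < T i k \<omega>} \<noteq> S}
          \<le> prob (\<Union>i\<in>S. \<Union>k\<in>R. Miss i k) + prob (\<Union>i\<in>N - S. Keep i)"
    using Miss_sets Keep_sets \<open>finite S\<close> \<open>finite N\<close> \<open>finite R\<close>
    by (intro order_trans[OF finite_measure_mono measure_Un_le]) (auto intro!: sets.finite_UN)
  also have "prob (\<Union>i\<in>S. \<Union>k\<in>R. Miss i k) \<le> (\<Sum>i\<in>S. \<Sum>k\<in>R. prob (Miss i k))"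
    using Miss_sets \<open>finite S\<close> \<open>finite R\<close>
    by (intro order_trans[OF measure_UNION_le] sum_mono measure_UNION_le) auto
  also have "\<dots> \<le> (\<Sum>i\<in>S. \<Sum>k\<in>R. p)"
    using signal unfolding Miss_def by (intro sum_mono) auto
  also have "prob (\<Union>i\<in>N - S. Keep i) \<le> (\<Sum>i\<in>N - S. prob (Keep i))"
    using Keep_sets \<open>finite N\<close> by (intro measure_UNION_le) auto
  also have "\<dots> \<le> (\<Sum>i\<in>N - S. q)"
    using null unfolding Keep_def by (intro sum_mono) auto
  finally show ?thesis by simp
qed

lemma sst_set_eq:
  "sst_set n m y k = {i \<in> {1..n}. \<forall>r\<in>{1..k}. 0 < (\<Sum>j = 1..m div 2. y i r j)}"
proof (induction k)
  case (Suc k)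
  then show ?case
    by (auto simp: atLeastAtMostSuc_conv)
qed auto

lemma two_powr_neg_le_chord:
  fixes f :: real
  assumes "0 \<le> f" "f \<le> 1"
  shows "2 powr (- f) \<le> 1 - f / 2"
proof -
  have "exp ((1 - f) *\<^sub>R 0 + f *\<^sub>R (- ln 2)) \<le> (1 - f) * exp 0 + f * exp (- ln 2)"
    using assms by (intro convex_onD[OF exp_convex]) auto
  then show ?thesis
    by (simp add: powr_def exp_minus)
qed

lemma half_pow_ceiling_le:
  fixes L :: real
  assumes "0 \<le> L"
  shows "(1/2) ^ nat \<lceil>L\<rceil> \<le> 2 powr (- L) * (1 - (nat \<lceil>L\<rceil> - L) / 2)"
proof -
  define f where "f = nat \<lceil>L\<rceil> - L"
  have f: "0 \<le> f" "f \<le> 1"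
    using assms unfolding f_def by linarith+
  have "(1/2::real) ^ nat \<lceil>L\<rceil> = inverse (2 powr nat \<lceil>L\<rceil>)"
    by (simp add: powr_realpow power_one_over inverse_eq_divide)
  also have "\<dots> = 2 powr (- L + - f)"
    by (simp add: f_def powr_minus)
  also have "\<dots> = 2 powr (- L) * 2 powr (- f)"
    by (rule powr_add)
  also have "\<dots> \<le> 2 powr (- L) * (1 - f / 2)"
    using f by (intro mult_left_mono two_powr_neg_le_chord) auto
  finally show ?thesis
    unfolding f_def .
qed

lemma sst_error_budget:
  fixes n s :: nat and \<delta> x :: real
  assumes "0 < \<delta>" "\<delta> \<le> 1" "s \<le> n"
    and x: "ln s + ln (log 2 (2 * real n / \<delta>)) + ln (1 / \<delta>) < x"
  shows "s * (sst_rounds n \<delta> * (exp (- x) / 2)) + (n - s) * (1/2) ^ sst_rounds n \<delta> < \<delta>"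
proof (cases "n = 0")
  case True
  then show ?thesis
    using assms by simp
next
  case False
  define L where "L = log 2 (2 * real n / \<delta>)"
  define K where "K = sst_rounds n \<delta>"
  define f where "f = K - L"
  have "2 \<le> 2 * n / \<delta>"
    using False assms(1,2) by (simp add: field_simps)
  then have L: "1 \<le> L" and "2 powr (- L) = \<delta> / (2 * n)"
    unfolding L_def by (simp_all add: le_log_iff powr_minus_divide)
  have K: "K = nat \<lceil>L\<rceil>"
    unfolding K_def L_def sst_rounds_def ..
  have f: "0 \<le> f" "f < 1"
    unfolding f_def K using L by linarith+
  have "(1/2) ^ K \<le> \<delta> / (2 * n) * (1 - f / 2)"
    using half_pow_ceiling_le[of L] L \<open>2 powr (- L) = \<delta> / (2 * n)\<close> unfolding K f_def by simp
  then have null: "(n - s) * (1/2) ^ K \<le> \<delta> / 2 * ((n - s) / n * (1 - f / 2))"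
    by (auto dest: mult_left_mono[where c = "real (n - s)"] simp: field_simps)
  show ?thesis
  proof (cases "s = 0")
    case True
    then have "\<delta> / 2 * ((n - s) / n * (1 - f / 2)) < \<delta>"
      using False f assms(1) by (simp add: field_simps add_nonneg_pos)
    with null True show ?thesis
      unfolding K_def by simp
  next
    case False
    have "exp (- x) < exp (- ln (s * L / \<delta>))"
      using x False L assms(1) by (simp add: L_def ln_mult ln_div)
    also have "\<dots> = \<delta> / (s * L)"
      using False L assms(1) by (simp add: exp_minus)
    finally have "s * (K * (exp (- x) / 2)) < s * (K * (\<delta> / (s * L) / 2))"
      using False L K by (intro mult_strict_left_mono) auto
    also have "\<dots> = \<delta> / 2 * (1 + f / L)"
      using False L unfolding f_def by (simp add: field_simps)
    finally have signal: "s * (K * (exp (- x) / 2)) < \<delta> / 2 * (1 + f / L)" .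
    have key: "(n - s) / n * (1 - f / 2) + (1 + f / L) \<le> 2"
    proof (cases "s = n")
      case True
      then show ?thesis
        using f L by (simp add: field_simps)
    next
      case False
      then have "4 \<le> 2 * n / \<delta>"
        using \<open>s \<noteq> 0\<close> \<open>s \<le> n\<close> assms(1,2) by (simp add: field_simps)
      then have "f / L \<le> f / 2"
        using f by (intro divide_left_mono) (auto simp: L_def le_log_iff)
      moreover have "(n - s) / n * (1 - f / 2) \<le> 1 - f / 2"
        using f \<open>n \<noteq> 0\<close> by (intro mult_left_le_one_le) auto
      ultimately show ?thesis
        by linarith
    qed
    have "\<delta> / 2 * ((n - s) / n * (1 - f / 2)) + \<delta> / 2 * (1 + f / L) \<le> \<delta>"
      using mult_left_mono[OF key, of "\<delta> / 2"] assms(1) by (simp add: distrib_left)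
    with null signal show ?thesis
      unfolding K_def by linarith
  qed
qed

lemma (in prob_space) prob_sst_set_ne_le:
  fixes Y :: "nat \<Rightarrow> nat \<Rightarrow> nat \<Rightarrow> 'a \<Rightarrow> real" and \<theta> :: real
  assumes "S \<subseteq> {1..n}" "0 \<le> \<theta>" "even m" "2 \<le> m"
    and indep: "indep_vars (\<lambda>_. borel) (\<lambda>(i, k, j). Y i k j) ({1..n} \<times> {1..K} \<times> {1..m div 2})"
    and normal: "\<And>i k j. i \<in> {1..n} \<Longrightarrow> k \<in> {1..K} \<Longrightarrow> j \<in> {1..m div 2} \<Longrightarrow>
           distributed M lborel (Y i k j) (normal_density (if i \<in> S then \<theta> else 0) 1)"
  shows "prob {\<omega> \<in> space M. sst_set n m (\<lambda>i k j. Y i k j \<omega>) K \<noteq> S}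
           \<le> card S * (K * (exp (- (m * \<theta>\<^sup>2 / 4)) / 2)) + (n - card S) * (1/2) ^ K"
proof -
  define J where "J = {1..m div 2}"
  define T where "T i k \<omega> = (\<Sum>j\<in>J. Y i k j \<omega>)" for i k \<omega>
  have J: "finite J" "J \<noteq> {}" "2 * card J = m"
    using assms(3,4) by (auto simp: J_def)
  have T_normal: "distributed M lborel (T i k)
      (normal_density (card J * (if i \<in> S then \<theta> else 0)) (sqrt (card J)))"
    if "i \<in> {1..n}" "k \<in> {1..K}" for i k
  proof -
    have "distributed M lborel (\<lambda>\<omega>. \<Sum>j\<in>J. Y i k j \<omega>)
        (normal_density (card J * (if i \<in> S then \<theta> else 0)) (sqrt (card J) * 1))"
      by (rule distributed_block_sum_normal[OF indep[folded J_def] that J(1,2)])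
        (use normal that in \<open>auto simp: J_def\<close>)
    then show ?thesis
      by (simp only: T_def[abs_def] mult_1_right)
  qed
  have signal: "prob {\<omega> \<in> space M. T i k \<omega> \<le> 0} \<le> exp (- (m * \<theta>\<^sup>2 / 4)) / 2"
    if "i \<in> S" "k \<in> {1..K}" for i k
  proof -
    have "i \<in> {1..n}"
      using that assms(1) by auto
    have "prob {\<omega> \<in> space M. T i k \<omega> \<le> 0} \<le> exp (- (card J * \<theta>)\<^sup>2 / (2 * card J)) / 2"
      using prob_normal_nonpos_le[OF T_normal[OF \<open>i \<in> {1..n}\<close> that(2)]] that(1) assms(2) J(1,2)
      by (simp add: card_gt_0_iff)
    also have "\<dots> = exp (- (m * \<theta>\<^sup>2 / 4)) / 2"
      using J by (auto simp: power2_eq_square card_gt_0_iff simp flip: J(3))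
    finally show ?thesis .
  qed
  have null: "prob {\<omega> \<in> space M. \<forall>k\<in>{1..K}. 0 < T i k \<omega>} \<le> (1/2) ^ K"
    if "i \<in> {1..n} - S" for i
  proof -
    have "indep_vars (\<lambda>_. borel) (T i) {1..K}"
      using indep_vars_block_sums[OF indep[folded J_def]] that by (simp add: T_def[abs_def])
    moreover have "distributed M lborel (T i k) (normal_density 0 (sqrt (card J)))"
      if "k \<in> {1..K}" for k
      using T_normal[of i k] \<open>i \<in> {1..n} - S\<close> that by simp
    ultimately have "prob {\<omega> \<in> space M. \<forall>k\<in>{1..K}. 0 < T i k \<omega>} = (1/2) ^ card {1..K}"
      using J(1,2) by (intro prob_all_centered_normal_pos) (auto simp: card_gt_0_iff)
    then show ?thesis
      by simp
  qed
  have "prob {\<omega> \<in> space M. {i \<in> {1..n}. \<forall>k\<in>{1..K}. 0 < T i k \<omega>} \<noteq> S}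
      \<le> card S * (card {1..K} * (exp (- (m * \<theta>\<^sup>2 / 4)) / 2)) + card ({1..n} - S) * (1/2) ^ K"
    using assms(1) signal null T_normal[THEN distributed_measurable]
    by (intro prob_threshold_support_ne_le) auto
  moreover have "card ({1..n} - S) = n - card S"
    using assms(1) by (simp add: card_Diff_subset finite_subset)
  ultimately show ?thesis
    by (simp add: sst_set_eq T_def J_def)
qed

theorem theorem4:
  fixes M :: "'a measure" and Y :: "nat \<Rightarrow> nat \<Rightarrow> nat \<Rightarrow> 'a \<Rightarrow> real"
    and n s m :: nat and S :: "nat set" and \<theta> \<delta> :: real
  assumes "prob_space M"
    and "S \<subseteq> {1..n}" and "card S = s"
    and "\<theta> > 0" and "\<delta> > 0" and "even m" and "m \<ge> 2"
    and "prob_space.indep_vars M (\<lambda>_. borel) (\<lambda>(i, k, j). Y i k j)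
           ({1..n} \<times> {1..sst_rounds n \<delta>} \<times> {1..m div 2})"
    and "\<And>i k j. i \<in> {1..n} \<Longrightarrow> k \<in> {1..sst_rounds n \<delta>} \<Longrightarrow> j \<in> {1..m div 2} \<Longrightarrow>
           distributed M lborel (Y i k j)
             (\<lambda>x. ennreal (normal_density (if i \<in> S then \<theta> else 0) 1 x))"
    and "real m > (ln (real s) + ln (log 2 (2 * real n / \<delta>)) + ln (1 / \<delta>)) / (\<theta>\<^sup>2 / 4)"
  shows "measure M {\<omega> \<in> space M. sst_output n m \<delta> (\<lambda>i k j. Y i k j \<omega>) \<noteq> S} < \<delta>"
proof -
  interpret prob_space M by fact
  show ?thesis
  proof (cases "\<delta> \<le> 1")
    case True
    have "s \<le> n"
      using card_mono[OF _ assms(2)] assms(3) by simp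
    moreover have "ln s + ln (log 2 (2 * real n / \<delta>)) + ln (1 / \<delta>) < m * \<theta>\<^sup>2 / 4"
      using assms(4,10) by (simp add: pos_divide_less_eq mult.commute)
    ultimately have "s * (sst_rounds n \<delta> * (exp (- (m * \<theta>\<^sup>2 / 4)) / 2))
        + (n - s) * (1/2) ^ sst_rounds n \<delta> < \<delta>"
      using True assms(5) by (intro sst_error_budget)
    moreover have "prob {\<omega> \<in> space M. sst_output n m \<delta> (\<lambda>i k j. Y i k j \<omega>) \<noteq> S}
        \<le> s * (sst_rounds n \<delta> * (exp (- (m * \<theta>\<^sup>2 / 4)) / 2)) + (n - s) * (1/2) ^ sst_rounds n \<delta>"
      unfolding sst_output_def assms(3)[symmetric]
      using assms(2,4,6-9) by (intro prob_sst_set_ne_le) auto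
    ultimately show ?thesis
      by linarith
  next
    case False
    then show ?thesis
      using prob_le_1 by (meson le_less_trans not_le)
  qed
qed

end
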